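(* Let $R$ be a formal resonant vector field and $\Phi$ a resonant analytic diffeomorphism which is tangent to identity. Then $D\Phi\cdot R$ is a formal resonant vector field.
   Context: Fix $\omega\in\mathbb{R}^d$ and $\lambda_1,\dots,\lambda_n\in\mathbb{C}$; $X$ are periodic variables (Fourier expansions in $e^{i\langle P,X\rangle}$, $P\in\mathbb{Z}^d$), $Y\in\mathbb{C}^n$, $|Q|=\sum Q_j$, $\langle Q,\Lambda\rangle=\sum Q_j\lambda_j$. A formal Fourier–Taylor series is $f=\sum f_{P,Q}e^{i\langle P,X\rangle}Y^Q$ with $\sum_P|f_{P,Q}|^2<\infty$ for each $Q$; it has order $k$ if $f_{P,Q}=0$ for $|Q|\le k-1$, and is resonant if $f_{P,Q}\ne0\Rightarrow i\langle P,\omega\rangle+\langle Q,\Lambda\rangle=0$. A formal vector field is a $(d+n)$-tuple $(R_1,\dots,R_{d+n})$ of formal series; it is resonant if $R_1,\dots,R_d$ are resonant and, for each $j'$, $R_{d+j',P,Q}\ne0\Rightarrow i\langle P,\omega\rangle+\langle Q,\Lambda\rangle-\lambda_{j'}=0$. A map $\Phi$ is tangent to identity if $\Phi_L-X_L$ has order $1$ for $L\le d$ and $\Phi_{d+j'}-Y_{j'}$ has order $2$. Writing $\Phi_j=X_j+\tilde\Phi_j$ ($j\le d$) and $\Phi_{d+j'}=Y_{j'}\tilde\Phi_{d+j'}$, $\Phi$ is resonant if all $\tilde\Phi_1,\dots,\tilde\Phi_{d+n}$ are resonant series. $D\Phi\cdot R$ denotes the Jacobian matrix of $\Phi$ (in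 the variables $X_1,\dots,X_d,Y_1,\dots,Y_n$) applied to $R$. *)

theory Defs
  imports "HOL-Analysis.Analysis"
begin

text \<open>A formal Fourier--Taylor series in the periodic variables X (indexed by 'd)
  and Y (indexed by 'n) is represented by its coefficient function
  f P Q = f_{P,Q}, with P :: int^'d and Q :: nat^'n.\<close>

type_synonym ('d, 'n) fts = "int^'d \<Rightarrow> nat^'n \<Rightarrow> complex"

definition absQ :: "nat^'n::finite \<Rightarrow> nat" where
  "absQ Q = (\<Sum>j\<in>UNIV. Q $ j)"

definition formal_series :: "('d::finite, 'n::finite) fts \<Rightarrow> bool" where
  "formal_series f \<longleftrightarrow> (\<forall>Q. (\<lambda>P. (cmod (f P Q))\<^sup>2) summable_on UNIV)"

definition has_order :: "nat \<Rightarrow> ('d::finite, 'n::finite) fts \<Rightarrow> bool" where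
  "has_order k f \<longleftrightarrow> (\<forall>P Q. absQ Q < k \<longrightarrow> f P Q = 0)"

definition resonance :: "real^'d::finite \<Rightarrow> complex^'n::finite \<Rightarrow> int^'d \<Rightarrow> nat^'n \<Rightarrow> complex" where
  "resonance \<omega> \<Lambda> P Q =
     \<i> * complex_of_real (\<Sum>j\<in>UNIV. real_of_int (P $ j) * \<omega> $ j)
     + (\<Sum>j\<in>UNIV. of_nat (Q $ j) * \<Lambda> $ j)"

definition resonant_series ::
  "real^'d::finite \<Rightarrow> complex^'n::finite \<Rightarrow> ('d, 'n) fts \<Rightarrow> bool" where
  "resonant_series \<omega> \<Lambda> f \<longleftrightarrow> formal_series f \<and>
     (\<forall>P Q. f P Q \<noteq> 0 \<longrightarrow> resonance \<omega> \<Lambda> P Q = 0)"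

text \<open>Formal vector fields: (d+n)-tuples of formal series, indexed by 'd + 'n
  (Inl L for the X-components, Inr j for the Y-components).\<close>

definition formal_vf :: "('d::finite + 'n::finite \<Rightarrow> ('d, 'n) fts) \<Rightarrow> bool" where
  "formal_vf R \<longleftrightarrow> (\<forall>i. formal_series (R i))"

definition resonant_vf ::
  "real^'d::finite \<Rightarrow> complex^'n::finite \<Rightarrow> ('d + 'n \<Rightarrow> ('d, 'n) fts) \<Rightarrow> bool" where
  "resonant_vf \<omega> \<Lambda> R \<longleftrightarrow> formal_vf R \<and>
     (\<forall>L. resonant_series \<omega> \<Lambda> (R (Inl L))) \<and>
     (\<forall>j' P Q. R (Inr j') P Q \<noteq> 0 \<longrightarrow> resonance \<omega> \<Lambda> P Q - \<Lambda> $ j' = 0)"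

text \<open>Analytic series: convergent on a neighbourhood {|Im X| < r, |Y_j| < rho}
  of the torus (absolute convergence of the Fourier--Taylor expansion).\<close>
definition analytic_series :: "('d::finite, 'n::finite) fts \<Rightarrow> bool" where
  "analytic_series f \<longleftrightarrow> (\<exists>r>0. \<exists>\<rho>>0.
     (\<lambda>(P, Q). cmod (f P Q) * exp (r * (\<Sum>j\<in>UNIV. real_of_int \<bar>P $ j\<bar>)) * \<rho> ^ absQ Q)
       summable_on UNIV)"

definition ts_Y :: "'n \<Rightarrow> ('d::finite, 'n::finite) fts" where
  "ts_Y j = (\<lambda>P Q. if P = 0 \<and> Q = (\<chi> i. if i = j then 1 else 0) then 1 else 0)"

definition ts_mulY :: "'n \<Rightarrow> ('d::finite, 'n::finite) fts \<Rightarrow> ('d, 'n) fts" where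
  "ts_mulY j f = (\<lambda>P Q. if Q $ j \<ge> 1 then f P (\<chi> i. if i = j then Q $ i - 1 else Q $ i) else 0)"

definition ts_dX :: "'d \<Rightarrow> ('d::finite, 'n::finite) fts \<Rightarrow> ('d, 'n) fts" where
  "ts_dX k f = (\<lambda>P Q. \<i> * of_int (P $ k) * f P Q)"

definition ts_dY :: "'n \<Rightarrow> ('d::finite, 'n::finite) fts \<Rightarrow> ('d, 'n) fts" where
  "ts_dY j f = (\<lambda>P Q. of_nat (Q $ j + 1) * f P (\<chi> i. if i = j then Q $ i + 1 else Q $ i))"

definition ts_mult :: "('d::finite, 'n::finite) fts \<Rightarrow> ('d, 'n) fts \<Rightarrow> ('d, 'n) fts" where
  "ts_mult f g = (\<lambda>P Q. \<Sum>Q1\<in>{Q1. \<forall>j. Q1 $ j \<le> Q $ j}.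
       infsum (\<lambda>P1. f P1 Q1 * g (P - P1) (\<chi> j. Q $ j - Q1 $ j)) UNIV)"

text \<open>A map Phi is represented by tPhi: Phi_L = X_L + tPhi (Inl L),
  Phi_{d+j} = Y_j * tPhi (Inr j).\<close>

definition tangent_to_id :: "('d::finite + 'n::finite \<Rightarrow> ('d, 'n) fts) \<Rightarrow> bool" where
  "tangent_to_id tPhi \<longleftrightarrow> (\<forall>L. has_order 1 (tPhi (Inl L))) \<and>
     (\<forall>j. has_order 2 (\<lambda>P Q. ts_mulY j (tPhi (Inr j)) P Q - ts_Y j P Q))"

definition resonant_map ::
  "real^'d::finite \<Rightarrow> complex^'n::finite \<Rightarrow> ('d + 'n \<Rightarrow> ('d, 'n) fts) \<Rightarrow> bool" where
  "resonant_map \<omega> \<Lambda> tPhi \<longleftrightarrow> (\<forall>i. resonant_series \<omega> \<Lambda> (tPhi i))"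

definition analytic_map :: "('d::finite + 'n::finite \<Rightarrow> ('d, 'n) fts) \<Rightarrow> bool" where
  "analytic_map tPhi \<longleftrightarrow> (\<forall>i. analytic_series (tPhi i))"

definition jac_apply ::
  "('d::finite + 'n::finite \<Rightarrow> ('d, 'n) fts) \<Rightarrow> ('d + 'n \<Rightarrow> ('d, 'n) fts) \<Rightarrow> ('d + 'n \<Rightarrow> ('d, 'n) fts)" where
  "jac_apply tPhi R = (\<lambda>i. case i of
      Inl L \<Rightarrow> (\<lambda>P Q. R (Inl L) P Q
                 + (\<Sum>k\<in>UNIV. ts_mult (ts_dX k (tPhi (Inl L))) (R (Inl k)) P Q)
                 + (\<Sum>j\<in>UNIV. ts_mult (ts_dY j (tPhi (Inl L))) (R (Inr j)) P Q))
    | Inr j' \<Rightarrow> (\<lambda>P Q.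
                   (\<Sum>k\<in>UNIV. ts_mult (ts_dX k (ts_mulY j' (tPhi (Inr j')))) (R (Inl k)) P Q)
                 + (\<Sum>j\<in>UNIV. ts_mult (ts_dY j (ts_mulY j' (tPhi (Inr j')))) (R (Inr j)) P Q)))"

end

theory Submission
  imports Defs
begin

text \<open>
  The linear field \<omega> \<partial>_X + \<Lambda> Y \<partial>_Y acts on the monomial e^(i<P,X>) Y^Q by
  multiplication with i<P,\<omega>> + <Q,\<Lambda>>, which is additive in (P,Q).  Resonance of a
  series (of the L-th resp. (d+j)-th component of a vector field) says that it is an eigenvector
  of this action with eigenvalue 0 (resp. \<lambda>_j).  Derivation in X keeps the eigenvalue,
  derivation in Y_j lowers it by \<lambda>_j, multiplication by Y_j raises it by \<lambda>_j and products add
  eigenvalues; hence every term of D\<Phi>\<cdot>R has eigenvalue 0 in the X-components and \<lambda>_j in the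
  (d+j)-th component.  That D\<Phi>\<cdot>R is again a formal series (square summable in P for each Q)
  is Young's inequality l^1 * l^2 \<subseteq> l^2, since analyticity of \<Phi> makes the coefficients of
  \<Phi> and of its X-derivatives absolutely summable in P.\<close>

lemma norm_square_le_infsum:
  fixes b :: "'i \<Rightarrow> 'a::real_normed_vector"
  assumes "(\<lambda>x. (norm (b x))\<^sup>2) summable_on UNIV"
  shows "(norm (b y))\<^sup>2 \<le> (\<Sum>\<^sub>\<infinity>x. (norm (b x))\<^sup>2)"
  using finite_sum_le_infsum[OF assms, of "{y}"] by simp

lemma square_summable_add:
  fixes f g :: "'i \<Rightarrow> 'a::real_normed_vector"
  assumes "(\<lambda>x. (norm (f x))\<^sup>2) summable_on A" and "(\<lambda>x. (norm (g x))\<^sup>2) summable_on A"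
  shows "(\<lambda>x. (norm (f x + g x))\<^sup>2) summable_on A"
proof (rule summable_on_comparison_test)
  show "(\<lambda>x. 2 * (norm (f x))\<^sup>2 + 2 * (norm (g x))\<^sup>2) summable_on A"
    using assms by (intro summable_on_add summable_on_cmult_right)
  show "(norm (f x + g x))\<^sup>2 \<le> 2 * (norm (f x))\<^sup>2 + 2 * (norm (g x))\<^sup>2" for x
  proof -
    have "(norm (f x + g x))\<^sup>2 \<le> (norm (f x) + norm (g x))\<^sup>2"
      by (intro power_mono norm_triangle_ineq) simp
    also have "\<dots> \<le> 2 * (norm (f x))\<^sup>2 + 2 * (norm (g x))\<^sup>2"
      using zero_le_power2[of "norm (f x) - norm (g x)"] by (simp add: power2_diff power2_sum)
    finally show ?thesis .
  qed
qed simp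

lemma square_summable_sum:
  fixes F :: "'a \<Rightarrow> 'i \<Rightarrow> 'b::real_normed_vector"
  assumes "\<And>x. x \<in> A \<Longrightarrow> (\<lambda>y. (norm (F x y))\<^sup>2) summable_on B"
  shows "(\<lambda>y. (norm (\<Sum>x\<in>A. F x y))\<^sup>2) summable_on B"
proof (cases "finite A")
  case True
  then show ?thesis using assms
    by (induction A rule: finite_induct) (auto intro: square_summable_add)
qed simp

lemma has_sum_sum:
  fixes f :: "'a \<Rightarrow> 'i \<Rightarrow> 'b::topological_comm_monoid_add"
  assumes "finite A" and "\<And>x. x \<in> A \<Longrightarrow> (f x has_sum s x) B"
  shows "((\<lambda>y. \<Sum>x\<in>A. f x y) has_sum (\<Sum>x\<in>A. s x)) B"
  using assms by (induction A rule: finite_induct) (auto intro: has_sum_add)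

lemma summable_on_weighted_translate:
  fixes a b :: "'i::ab_group_add \<Rightarrow> complex"
  assumes a: "(\<lambda>y. norm (a y)) summable_on UNIV" and b: "(\<lambda>x. (norm (b x))\<^sup>2) summable_on UNIV"
  shows "(\<lambda>y. norm (a y) * (norm (b (x - y)))\<^sup>2) summable_on UNIV"
  by (rule summable_on_comparison_test[OF summable_on_cmult_left[OF a]])
     (auto intro: mult_left_mono norm_square_le_infsum[OF b])

lemma convolution_norm_square_le:
  fixes a b :: "'i::ab_group_add \<Rightarrow> complex"
  assumes a: "(\<lambda>y. norm (a y)) summable_on UNIV" and b: "(\<lambda>x. (norm (b x))\<^sup>2) summable_on UNIV"
  shows "(norm (\<Sum>\<^sub>\<infinity>y. a y * b (x - y)))\<^sup>2
           \<le> (\<Sum>\<^sub>\<infinity>y. norm (a y)) * (\<Sum>\<^sub>\<infinity>y. norm (a y) * (norm (b (x - y)))\<^sup>2)"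
proof -
  define SB where "SB = (\<Sum>\<^sub>\<infinity>y. (norm (b y))\<^sup>2)"
  have b_le: "norm (b y) \<le> sqrt SB" for y
    using norm_square_le_infsum[OF b] real_le_rsqrt unfolding SB_def by blast
  have abs_summable: "(\<lambda>y. norm (a y) * norm (b (x - y))) summable_on UNIV"
    by (rule summable_on_comparison_test[OF summable_on_cmult_left[OF a, of "sqrt SB"]])
       (auto intro: mult_left_mono b_le)
  let ?M = "(\<Sum>\<^sub>\<infinity>y. norm (a y)) * (\<Sum>\<^sub>\<infinity>y. norm (a y) * (norm (b (x - y)))\<^sup>2)"
  have "(\<Sum>\<^sub>\<infinity>y. norm (a y) * norm (b (x - y))) \<le> sqrt ?M"
  proof (rule infsum_le_finite_sums[OF abs_summable])
    fix F :: "'i set" assume F: "finite F"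
    have "(\<Sum>y\<in>F. norm (a y) * norm (b (x - y)))\<^sup>2
        = (\<Sum>y\<in>F. sqrt (norm (a y)) * (sqrt (norm (a y)) * norm (b (x - y))))\<^sup>2"
      by (simp add: mult.assoc[symmetric])
    also have "\<dots> \<le> (\<Sum>y\<in>F. (sqrt (norm (a y)))\<^sup>2)
                  * (\<Sum>y\<in>F. (sqrt (norm (a y)) * norm (b (x - y)))\<^sup>2)"
      by (rule Cauchy_Schwarz_ineq_sum)
    also have "\<dots> = (\<Sum>y\<in>F. norm (a y)) * (\<Sum>y\<in>F. norm (a y) * (norm (b (x - y)))\<^sup>2)"
      by (simp add: power_mult_distrib)
    also have "\<dots> \<le> ?M"
      using F by (intro mult_mono finite_sum_le_infsum a summable_on_weighted_translate[OF a b]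
          sum_nonneg infsum_nonneg) auto
    finally show "(\<Sum>y\<in>F. norm (a y) * norm (b (x - y))) \<le> sqrt ?M"
      using real_le_rsqrt by blast
  qed
  moreover have "norm (\<Sum>\<^sub>\<infinity>y. a y * b (x - y)) \<le> (\<Sum>\<^sub>\<infinity>y. norm (a y) * norm (b (x - y)))"
    using norm_infsum_bound[of "\<lambda>y. a y * b (x - y)" UNIV] abs_summable by (simp add: norm_mult)
  ultimately have "(norm (\<Sum>\<^sub>\<infinity>y. a y * b (x - y)))\<^sup>2 \<le> (sqrt ?M)\<^sup>2"
    by (intro power_mono) auto
  also have "\<dots> = ?M"
    by (simp add: infsum_nonneg)
  finally show ?thesis .
qed

lemma summable_on_weighted_translates:
  fixes a b :: "'i::ab_group_add \<Rightarrow> complex"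
  assumes a: "(\<lambda>y. norm (a y)) summable_on UNIV" and b: "(\<lambda>x. (norm (b x))\<^sup>2) summable_on UNIV"
  shows "(\<lambda>x. \<Sum>\<^sub>\<infinity>y. norm (a y) * (norm (b (x - y)))\<^sup>2) summable_on UNIV"
proof (rule nonneg_bdd_above_summable_on)
  define SB where "SB = (\<Sum>\<^sub>\<infinity>y. (norm (b y))\<^sup>2)"
  show "bdd_above (sum (\<lambda>x. \<Sum>\<^sub>\<infinity>y. norm (a y) * (norm (b (x - y)))\<^sup>2) ` {G. G \<subseteq> UNIV \<and> finite G})"
  proof (rule bdd_aboveI2)
    fix G :: "'i set" assume "G \<in> {G. G \<subseteq> UNIV \<and> finite G}"
    then have G: "finite G" by simp
    have "((\<lambda>y. \<Sum>x\<in>G. norm (a y) * (norm (b (x - y)))\<^sup>2)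
            has_sum (\<Sum>x\<in>G. \<Sum>\<^sub>\<infinity>y. norm (a y) * (norm (b (x - y)))\<^sup>2)) UNIV"
      using G summable_on_weighted_translate[OF a b] by (intro has_sum_sum) auto
    moreover have "((\<lambda>y. norm (a y) * SB) has_sum (\<Sum>\<^sub>\<infinity>y. norm (a y) * SB)) UNIV"
      using a by (intro has_sum_infsum summable_on_cmult_left)
    moreover have "(\<Sum>x\<in>G. norm (a y) * (norm (b (x - y)))\<^sup>2) \<le> norm (a y) * SB" for y
    proof -
      have "(\<Sum>x\<in>G. (norm (b (x - y)))\<^sup>2) = (\<Sum>z\<in>(\<lambda>x. x - y) ` G. (norm (b z))\<^sup>2)"
        by (subst sum.reindex) (auto simp: inj_on_def)
      also have "\<dots> \<le> SB"
        unfolding SB_def using G by (intro finite_sum_le_infsum b) auto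
      finally show ?thesis
        by (simp add: sum_distrib_left[symmetric] mult_left_mono)
    qed
    ultimately show "(\<Sum>x\<in>G. \<Sum>\<^sub>\<infinity>y. norm (a y) * (norm (b (x - y)))\<^sup>2) \<le> (\<Sum>\<^sub>\<infinity>y. norm (a y) * SB)"
      by (rule has_sum_mono)
  qed
qed (simp add: infsum_nonneg)

lemma square_summable_convolution:
  fixes a b :: "'i::ab_group_add \<Rightarrow> complex"
  assumes a: "(\<lambda>y. norm (a y)) summable_on UNIV" and b: "(\<lambda>x. (norm (b x))\<^sup>2) summable_on UNIV"
  shows "(\<lambda>x. (norm (\<Sum>\<^sub>\<infinity>y. a y * b (x - y)))\<^sup>2) summable_on UNIV"
  by (rule summable_on_comparison_test
        [OF summable_on_cmult_right[OF summable_on_weighted_translates[OF a b]]])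
     (auto intro: convolution_norm_square_le[OF a b])

lemma formal_series_add:
  assumes "formal_series f" and "formal_series g"
  shows "formal_series (\<lambda>P Q. f P Q + g P Q)"
  using assms unfolding formal_series_def by (auto intro: square_summable_add)

lemma formal_series_sum:
  assumes "\<And>x. x \<in> A \<Longrightarrow> formal_series (F x)"
  shows "formal_series (\<lambda>P Q. \<Sum>x\<in>A. F x P Q)"
  using assms unfolding formal_series_def by (auto intro: square_summable_sum)

lemma formal_series_ts_mult:
  assumes "\<And>Q. (\<lambda>P. norm (f P Q)) summable_on UNIV" and "formal_series g"
  shows "formal_series (ts_mult f g)"
  using assms unfolding formal_series_def ts_mult_def
  by (auto intro!: square_summable_sum square_summable_convolution)

definition abs_summable_with_dX :: "('d::finite, 'n::finite) fts \<Rightarrow> bool" where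
  "abs_summable_with_dX f \<longleftrightarrow>
     (\<forall>Q. (\<lambda>P. norm (f P Q)) summable_on UNIV \<and> (\<forall>k. (\<lambda>P. norm (ts_dX k f P Q)) summable_on UNIV))"

lemma analytic_series_weighted_summable:
  fixes f :: "('d::finite, 'n::finite) fts"
  assumes "analytic_series f"
  obtains r c where "r > 0" and "c > 0"
    and "(\<lambda>P. norm (f P Q) * exp (r * (\<Sum>j\<in>UNIV. real_of_int \<bar>P $ j\<bar>)) * c) summable_on UNIV"
proof -
  obtain r \<rho> where "r > 0" and "\<rho> > 0" and
    S: "(\<lambda>(P, Q). norm (f P Q) * exp (r * (\<Sum>j\<in>UNIV. real_of_int \<bar>P $ j\<bar>)) * \<rho> ^ absQ Q) summable_on UNIV"
    using assms unfolding analytic_series_def by blast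
  have "(\<lambda>(P, Q). norm (f P Q) * exp (r * (\<Sum>j\<in>UNIV. real_of_int \<bar>P $ j\<bar>)) * \<rho> ^ absQ Q)
          summable_on (\<lambda>P. (P, Q)) ` UNIV"
    using S by (rule summable_on_subset) auto
  then have "(\<lambda>P. norm (f P Q) * exp (r * (\<Sum>j\<in>UNIV. real_of_int \<bar>P $ j\<bar>)) * \<rho> ^ absQ Q) summable_on UNIV"
    by (subst (asm) summable_on_reindex) (auto simp: inj_on_def o_def)
  with \<open>r > 0\<close> \<open>\<rho> > 0\<close> show thesis
    by (intro that) auto
qed

lemma analytic_series_imp_abs_summable_with_dX:
  fixes f :: "('d::finite, 'n::finite) fts"
  assumes "analytic_series f"
  shows "abs_summable_with_dX f"
  unfolding abs_summable_with_dX_def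
proof (intro allI conjI)
  fix Q :: "nat^'n" and k :: 'd
  define E where "E r P = exp (r * (\<Sum>j\<in>UNIV. real_of_int \<bar>P $ j\<bar>))" for r and P :: "int^'d"
  obtain r c where r: "r > 0" and c: "c > 0" and weighted: "(\<lambda>P. norm (f P Q) * E r P * c) summable_on UNIV"
    using analytic_series_weighted_summable[OF assms] unfolding E_def by blast
  have "1 \<le> E r P" for P
    unfolding E_def using r by (simp add: sum_nonneg)
  then have bound: "norm (f P Q) \<le> 1 / c * (norm (f P Q) * E r P * c)" for P
    using c mult_left_mono[of 1 "E r P" "norm (f P Q)"] by simp
  show "(\<lambda>P. norm (f P Q)) summable_on UNIV"
    by (rule summable_on_comparison_test[OF summable_on_cmult_left[OF weighted, of "1 / c"]])
       (use bound in auto)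
  have "r * \<bar>P $ k\<bar> \<le> E r P" for P
  proof -
    have "r * \<bar>P $ k\<bar> \<le> r * (\<Sum>j\<in>UNIV. real_of_int \<bar>P $ j\<bar>)"
      using r by (intro mult_left_mono member_le_sum) auto
    also have "\<dots> \<le> E r P"
      unfolding E_def by (smt (verit) exp_ge_add_one_self)
    finally show ?thesis .
  qed
  then have bound: "norm (ts_dX k f P Q) \<le> 1 / (r * c) * (norm (f P Q) * E r P * c)" for P
    using r c mult_right_mono[of "r * \<bar>P $ k\<bar>" "E r P" "norm (f P Q)"]
    by (simp add: ts_dX_def norm_mult field_simps)
  show "(\<lambda>P. norm (ts_dX k f P Q)) summable_on UNIV"
    by (rule summable_on_comparison_test[OF summable_on_cmult_left[OF weighted, of "1 / (r * c)"]])
       (use bound in auto)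
qed

lemma abs_summable_with_dX_ts_mulY:
  assumes "abs_summable_with_dX f"
  shows "abs_summable_with_dX (ts_mulY j f)"
  unfolding abs_summable_with_dX_def
proof (intro allI)
  fix Q
  show "(\<lambda>P. norm (ts_mulY j f P Q)) summable_on UNIV \<and>
        (\<forall>k. (\<lambda>P. norm (ts_dX k (ts_mulY j f) P Q)) summable_on UNIV)"
    using assms unfolding abs_summable_with_dX_def ts_dX_def ts_mulY_def
    by (cases "Q $ j \<ge> 1") auto
qed

lemma abs_summable_ts_dY:
  assumes "abs_summable_with_dX f"
  shows "(\<lambda>P. norm (ts_dY j f P Q)) summable_on UNIV"
proof -
  have "(\<lambda>P. norm (f P (\<chi> i. if i = j then Q $ i + 1 else Q $ i))) summable_on UNIV"
    using assms unfolding abs_summable_with_dX_def by blast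
  then show ?thesis
    unfolding ts_dY_def norm_mult norm_of_nat by (rule summable_on_cmult_right)
qed

lemma formal_vf_jac_apply:
  assumes R: "formal_vf R" and "analytic_map tPhi"
  shows "formal_vf (jac_apply tPhi R)"
proof -
  have "abs_summable_with_dX (tPhi i)" for i
    using assms(2) analytic_series_imp_abs_summable_with_dX unfolding analytic_map_def by blast
  then have "abs_summable_with_dX g"
    if "g \<in> range tPhi \<union> range (\<lambda>j'. ts_mulY j' (tPhi (Inr j')))" for g
    using that abs_summable_with_dX_ts_mulY by blast
  then have "formal_series (ts_mult (ts_dX k g) (R i))" "formal_series (ts_mult (ts_dY j g) (R i))"
    if "g \<in> range tPhi \<union> range (\<lambda>j'. ts_mulY j' (tPhi (Inr j')))" for g k j i
    using that R unfolding formal_vf_def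
    by (auto intro!: formal_series_ts_mult abs_summable_ts_dY simp: abs_summable_with_dX_def)
  then show ?thesis
    using R unfolding formal_vf_def jac_apply_def
    by (auto split: sum.split intro!: formal_series_add formal_series_sum)
qed

lemma resonance_split:
  assumes "\<forall>j. Q1 $ j \<le> Q $ j"
  shows "resonance \<omega> \<Lambda> P Q
           = resonance \<omega> \<Lambda> P1 Q1 + resonance \<omega> \<Lambda> (P - P1) (\<chi> j. Q $ j - Q1 $ j)"
proof -
  have "(\<Sum>j\<in>UNIV. real_of_int (P $ j) * \<omega> $ j)
      = (\<Sum>j\<in>UNIV. real_of_int (P1 $ j) * \<omega> $ j) + (\<Sum>j\<in>UNIV. real_of_int ((P - P1) $ j) * \<omega> $ j)"
    by (simp add: sum.distrib[symmetric] algebra_simps)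
  moreover have "(\<Sum>j\<in>UNIV. of_nat (Q $ j) * \<Lambda> $ j)
      = (\<Sum>j\<in>UNIV. of_nat (Q1 $ j) * \<Lambda> $ j) + (\<Sum>j\<in>UNIV. of_nat ((\<chi> j. Q $ j - Q1 $ j) $ j) * \<Lambda> $ j)"
    using assms by (simp add: sum.distrib[symmetric] algebra_simps of_nat_diff)
  ultimately show ?thesis
    unfolding resonance_def by (simp add: algebra_simps)
qed

lemma resonance_incr:
  "resonance \<omega> \<Lambda> P (\<chi> i. if i = j then Q $ i + 1 else Q $ i) = resonance \<omega> \<Lambda> P Q + \<Lambda> $ j"
proof -
  have "(\<Sum>i\<in>UNIV. of_nat ((\<chi> i. if i = j then Q $ i + 1 else Q $ i) $ i) * \<Lambda> $ i)
      = (\<Sum>i\<in>UNIV. of_nat (Q $ i) * \<Lambda> $ i + (if i = j then \<Lambda> $ i else 0))"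
    by (rule sum.cong) (auto simp: algebra_simps)
  then show ?thesis
    unfolding resonance_def by (simp add: sum.distrib algebra_simps)
qed

definition resonant_at :: "real^'d::finite \<Rightarrow> complex^'n::finite \<Rightarrow> complex \<Rightarrow> ('d, 'n) fts \<Rightarrow> bool" where
  "resonant_at \<omega> \<Lambda> a f \<longleftrightarrow> (\<forall>P Q. f P Q \<noteq> 0 \<longrightarrow> resonance \<omega> \<Lambda> P Q = a)"

lemma resonant_series_iff: "resonant_series \<omega> \<Lambda> f \<longleftrightarrow> formal_series f \<and> resonant_at \<omega> \<Lambda> 0 f"
  unfolding resonant_series_def resonant_at_def ..

lemma resonant_vf_iff:
  "resonant_vf \<omega> \<Lambda> R \<longleftrightarrow>
     formal_vf R \<and> (\<forall>L. resonant_at \<omega> \<Lambda> 0 (R (Inl L))) \<and> (\<forall>j. resonant_at \<omega> \<Lambda> (\<Lambda> $ j) (R (Inr j)))"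
  unfolding resonant_vf_def resonant_series_iff resonant_at_def formal_vf_def by auto

lemma resonant_at_add:
  assumes "resonant_at \<omega> \<Lambda> a f" and "resonant_at \<omega> \<Lambda> a g"
  shows "resonant_at \<omega> \<Lambda> a (\<lambda>P Q. f P Q + g P Q)"
  using assms unfolding resonant_at_def by force

lemma resonant_at_sum:
  assumes "\<And>x. x \<in> A \<Longrightarrow> resonant_at \<omega> \<Lambda> a (F x)"
  shows "resonant_at \<omega> \<Lambda> a (\<lambda>P Q. \<Sum>x\<in>A. F x P Q)"
  using assms sum.neutral unfolding resonant_at_def by metis

lemma resonant_at_ts_dX:
  assumes "resonant_at \<omega> \<Lambda> a f"
  shows "resonant_at \<omega> \<Lambda> a (ts_dX k f)"
  using assms unfolding resonant_at_def ts_dX_def by simp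

lemma resonant_at_ts_dY:
  assumes "resonant_at \<omega> \<Lambda> a f"
  shows "resonant_at \<omega> \<Lambda> (a - \<Lambda> $ j) (ts_dY j f)"
  unfolding resonant_at_def
proof (intro allI impI)
  fix P Q assume "ts_dY j f P Q \<noteq> 0"
  then have "f P (\<chi> i. if i = j then Q $ i + 1 else Q $ i) \<noteq> 0"
    unfolding ts_dY_def by simp
  then have "resonance \<omega> \<Lambda> P (\<chi> i. if i = j then Q $ i + 1 else Q $ i) = a"
    using assms unfolding resonant_at_def by blast
  then show "resonance \<omega> \<Lambda> P Q = a - \<Lambda> $ j"
    unfolding resonance_incr by (simp add: eq_diff_eq)
qed

lemma resonant_at_ts_mulY:
  assumes "resonant_at \<omega> \<Lambda> a f"
  shows "resonant_at \<omega> \<Lambda> (a + \<Lambda> $ j) (ts_mulY j f)"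
  unfolding resonant_at_def
proof (intro allI impI)
  fix P Q assume nonzero: "ts_mulY j f P Q \<noteq> 0"
  define Q' where "Q' = (\<chi> i. if i = j then Q $ i - 1 else Q $ i)"
  from nonzero have "1 \<le> Q $ j" and "f P Q' \<noteq> 0"
    unfolding ts_mulY_def Q'_def by (auto split: if_splits)
  then have "Q = (\<chi> i. if i = j then Q' $ i + 1 else Q' $ i)" and "resonance \<omega> \<Lambda> P Q' = a"
    using assms unfolding resonant_at_def Q'_def by (auto simp: vec_eq_iff)
  then show "resonance \<omega> \<Lambda> P Q = a + \<Lambda> $ j"
    using resonance_incr[of \<omega> \<Lambda> P j Q'] by simp
qed

lemma resonant_at_ts_mult:
  assumes f: "resonant_at \<omega> \<Lambda> a f" and g: "resonant_at \<omega> \<Lambda> b g"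
  shows "resonant_at \<omega> \<Lambda> (a + b) (ts_mult f g)"
  unfolding resonant_at_def
proof (intro allI impI)
  fix P Q assume "ts_mult f g P Q \<noteq> 0"
  then obtain Q1 where "Q1 \<in> {Q1. \<forall>j. Q1 $ j \<le> Q $ j}"
    and "(\<Sum>\<^sub>\<infinity>P1. f P1 Q1 * g (P - P1) (\<chi> j. Q $ j - Q1 $ j)) \<noteq> 0"
    unfolding ts_mult_def by (rule sum.not_neutral_contains_not_neutral)
  moreover from this(2) obtain P1 where "f P1 Q1 * g (P - P1) (\<chi> j. Q $ j - Q1 $ j) \<noteq> 0"
    using infsum_0[of UNIV "\<lambda>P1. f P1 Q1 * g (P - P1) (\<chi> j. Q $ j - Q1 $ j)"] by auto
  ultimately have Q1: "\<forall>j. Q1 $ j \<le> Q $ j" and "resonance \<omega> \<Lambda> P1 Q1 = a"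
    and "resonance \<omega> \<Lambda> (P - P1) (\<chi> j. Q $ j - Q1 $ j) = b"
    using f g unfolding resonant_at_def by auto
  then show "resonance \<omega> \<Lambda> P Q = a + b"
    using resonance_split[OF Q1, of \<omega> \<Lambda> P P1] by simp
qed

lemma resonant_at_jac_apply:
  assumes R: "\<forall>L. resonant_at \<omega> \<Lambda> 0 (R (Inl L))" "\<forall>j. resonant_at \<omega> \<Lambda> (\<Lambda> $ j) (R (Inr j))"
    and tPhi: "\<forall>i. resonant_at \<omega> \<Lambda> 0 (tPhi i)"
  shows "resonant_at \<omega> \<Lambda> 0 (jac_apply tPhi R (Inl L))"
    and "resonant_at \<omega> \<Lambda> (\<Lambda> $ j') (jac_apply tPhi R (Inr j'))"
proof -
  have "resonant_at \<omega> \<Lambda> (0 + 0) (ts_mult (ts_dX k (tPhi (Inl L))) (R (Inl k)))" for k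
    using tPhi R by (intro resonant_at_ts_mult resonant_at_ts_dX) auto
  moreover have "resonant_at \<omega> \<Lambda> ((0 - \<Lambda> $ j) + \<Lambda> $ j) (ts_mult (ts_dY j (tPhi (Inl L))) (R (Inr j)))" for j
    using tPhi R by (intro resonant_at_ts_mult resonant_at_ts_dY) auto
  ultimately show "resonant_at \<omega> \<Lambda> 0 (jac_apply tPhi R (Inl L))"
    using R unfolding jac_apply_def by (auto intro!: resonant_at_add resonant_at_sum)
  have mulY: "resonant_at \<omega> \<Lambda> (0 + \<Lambda> $ j') (ts_mulY j' (tPhi (Inr j')))"
    using tPhi by (intro resonant_at_ts_mulY) auto
  have "resonant_at \<omega> \<Lambda> ((0 + \<Lambda> $ j') + 0) (ts_mult (ts_dX k (ts_mulY j' (tPhi (Inr j')))) (R (Inl k)))" for k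
    using mulY R by (intro resonant_at_ts_mult resonant_at_ts_dX) auto
  moreover have "resonant_at \<omega> \<Lambda> (((0 + \<Lambda> $ j') - \<Lambda> $ j) + \<Lambda> $ j)
                   (ts_mult (ts_dY j (ts_mulY j' (tPhi (Inr j')))) (R (Inr j)))" for j
    using mulY R by (intro resonant_at_ts_mult resonant_at_ts_dY) auto
  ultimately show "resonant_at \<omega> \<Lambda> (\<Lambda> $ j') (jac_apply tPhi R (Inr j'))"
    unfolding jac_apply_def by (auto intro!: resonant_at_add resonant_at_sum)
qed

theorem lemma5p2:
  fixes \<omega> :: "real^'d::finite" and \<Lambda> :: "complex^'n::finite"
    and R tPhi :: "'d + 'n \<Rightarrow> ('d, 'n) fts"
  assumes "resonant_vf \<omega> \<Lambda> R"
    and "analytic_map tPhi"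
    and "resonant_map \<omega> \<Lambda> tPhi"
    and "tangent_to_id tPhi"
  shows "resonant_vf \<omega> \<Lambda> (jac_apply tPhi R)"
proof -
  have R: "formal_vf R" "\<forall>L. resonant_at \<omega> \<Lambda> 0 (R (Inl L))"
    "\<forall>j. resonant_at \<omega> \<Lambda> (\<Lambda> $ j) (R (Inr j))"
    using assms(1) unfolding resonant_vf_iff by auto
  have tPhi: "\<forall>i. resonant_at \<omega> \<Lambda> 0 (tPhi i)"
    using assms(3) unfolding resonant_map_def resonant_series_iff by auto
  show ?thesis
    unfolding resonant_vf_iff
    using formal_vf_jac_apply[OF R(1) assms(2)] resonant_at_jac_apply[OF R(2,3) tPhi] by blast
qed

end
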